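(* For all integers $i,j,m\ge0$, $$\overline{\mathfrak{C}}_{ijm}=\frac{(i+j-m+2)(i-j+m+2)(-i+j+m+2)(i+j+m+6)}{4\sqrt{2\pi(i+1)(i+3)(j+1)(j+3)(m+1)(m+3)}}\cdot\mathbf{1}(|j-m|\le i\le j+m)\,\mathbf{1}(|i-m|\le j\le i+m)\,\mathbf{1}(|i-j|\le m\le i+j)$$ $$\cdot\,\mathbf{1}(j+m-i\in2\mathbb{N}\cup\{0\})\,\mathbf{1}(i+m-j\in2\mathbb{N}\cup\{0\})\,\mathbf{1}(i+j-m\in2\mathbb{N}\cup\{0\}).$$
   Context: $\mathfrak{e}_n(x)=\mathfrak{N}_nP_n^{(3/2,3/2)}(\cos x)$ with $P_n^{(3/2,3/2)}$ the Jacobi polynomial, $\omega_n=n+2$ and $\mathfrak{N}_n=\frac{\sqrt{\omega_n\Gamma(1+n)\Gamma(4+n)}}{2\sqrt2\,\Gamma(5/2+n)}$. $\overline{\mathfrak{C}}_{ijm}=\int_0^\pi\mathfrak{e}_i\mathfrak{e}_j\mathfrak{e}_m\sin^4x\,dx$. $\mathbf{1}(\cdot)$ is the indicator of the condition. *)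

theory Defs
  imports "HOL-Analysis.Analysis"
begin

definition jacobiP :: "nat \<Rightarrow> real \<Rightarrow> real \<Rightarrow> real \<Rightarrow> real" where
  "jacobiP n a b x =
     (\<Sum>s\<le>n. ((real n + a) gchoose (n - s)) * ((real n + b) gchoose s)
              * ((x - 1) / 2) ^ s * ((x + 1) / 2) ^ (n - s))"

definition omega_n :: "nat \<Rightarrow> real" where
  "omega_n n = real n + 2"

definition normN :: "nat \<Rightarrow> real" where
  "normN n = sqrt (omega_n n * Gamma (1 + real n) * Gamma (4 + real n))
             / (2 * sqrt 2 * Gamma (5/2 + real n))"

definition efun :: "nat \<Rightarrow> real \<Rightarrow> real" where
  "efun n x = normN n * jacobiP n (3/2) (3/2) (cos x)"

definition Cbar :: "nat \<Rightarrow> nat \<Rightarrow> nat \<Rightarrow> real" where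
  "Cbar i j m = integral {0..pi} (\<lambda>x. efun i x * efun j x * efun m x * sin x ^ 4)"

definition ind :: "bool \<Rightarrow> real" where
  "ind P = (if P then 1 else 0)"

end

theory Submission
  imports Defs
begin

text \<open>
  With phi = t/2 the Jacobi sum for P_n^(1/2,1/2)(cos t) sin t becomes, up to a constant, the
  binomial expansion of sin((2n+2) phi). Differentiating, and using that the derivative of
  P_(n+1)^(1/2,1/2) is (n+3)/2 P_n^(3/2,3/2), shows that sin^3 t P_n^(3/2,3/2)(cos t) is a multiple of
  cos t sin((n+2)t) - (n+2) sin t cos((n+2)t). Hence suitably rescaled functions g_n satisfy
  (n+1) g_(n+1) + (n+3) g_(n-1) = 2 (n+2) cos t g_n, and evaluating the integral of
  cos t g_a g_b g_c sin^4 t with this recurrence in a and in b gives a linear recurrence for the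
  triple integrals J(a,b,c). That recurrence, the symmetry of J and the values J(0,0,m) determine J.
  The claimed closed form satisfies the same three conditions, because its polynomial factor
  vanishes where a triangle inequality fails by exactly 2. The normalisation of the e_n only
  contributes a Gamma function computation.
\<close>

lemma gbinomial_Suc_mult:
  "of_nat (Suc k) * ((a::'a::field_char_0) gchoose Suc k) = (a - of_nat k) * (a gchoose k)"
  unfolding gbinomial_absorption gbinomial_absorb_comp ..

lemma Im_i_power: "Im (\<i> ^ k) = (if even k then 0 else (-1) ^ (k div 2))"
proof (cases "even k")
  case True then show ?thesis by simp
next
  case False
  then obtain j where "k = Suc (j * 2)" by (metis oddE mult.commute Suc_eq_plus1)
  then show ?thesis by simp
qed

lemma sin_even_multiple:
  "sin (real (2 * n + 2) * x) =
    (\<Sum>j\<le>n. real ((2 * n + 2) choose (2 * j + 1)) * (-1) ^ j * sin x ^ (2 * j + 1) * cos x ^ (2 * n + 1 - 2 * j))"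
proof -
  define N where "N = 2 * Suc n"
  define t where "t k = real (N choose k) * Im (\<i> ^ k) * sin x ^ k * cos x ^ (N - k)" for k
  have "cis x = \<i> * complex_of_real (sin x) + complex_of_real (cos x)"
    by (simp add: complex_eq_iff)
  then have "sin (real N * x) = Im ((\<i> * complex_of_real (sin x) + complex_of_real (cos x)) ^ N)"
    by (simp add: sin_n_Im_cis_pow_n)
  also have "\<dots> = (\<Sum>k\<le>N. t k)"
    by (simp add: binomial_ring t_def power_mult_distrib mult.assoc flip: of_real_power)
  also have "\<dots> = (\<Sum>k<N. t k)"
    by (simp add: N_def t_def Im_i_power flip: lessThan_Suc_atMost)
  also have "\<dots> = (\<Sum>k<2 * Suc n. if even k then 0 else t k)"
    unfolding N_def by (rule sum.cong) (auto simp: t_def Im_i_power)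
  also have "\<dots> = (\<Sum>j<Suc n. t (2 * j + 1))"
    by (simp add: sum_split_even_odd)
  finally show ?thesis
    by (simp add: N_def t_def lessThan_Suc_atMost Im_i_power mult_ac)
qed

lemma proportional_if_same_ratio:
  fixes f h p q :: "nat \<Rightarrow> 'a::field"
  assumes f: "\<And>j. j < n \<Longrightarrow> f (Suc j) * p j = f j * q j"
    and h: "\<And>j. j < n \<Longrightarrow> h (Suc j) * p j = h j * q j"
    and p: "\<And>j. j < n \<Longrightarrow> p j \<noteq> 0"
    and "j \<le> n"
  shows "f j * h 0 = h j * f 0"
  using \<open>j \<le> n\<close>
proof (induction j)
  case (Suc j)
  then have "j < n" by simp
  have "f (Suc j) * h 0 * p j = f j * h 0 * q j"
    using f[OF \<open>j < n\<close>] by (simp add: mult_ac)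
  also have "\<dots> = h j * f 0 * q j"
    using Suc by simp
  also have "\<dots> = h (Suc j) * f 0 * p j"
    using h[OF \<open>j < n\<close>] by (simp add: mult_ac)
  finally show ?case
    using p[OF \<open>j < n\<close>] by simp
qed simp

lemma gbinomial_half_product_step:
  assumes "j < n"
  shows "((real n + 1/2) gchoose (n - Suc j)) * ((real n + 1/2) gchoose Suc j) * ((real j + 1) * (real j + 3/2))
       = ((real n + 1/2) gchoose (n - j)) * ((real n + 1/2) gchoose j) * ((real n - real j) * (real n - real j + 1/2))"
proof -
  define r where "r = real n + 1/2"
  have "n - j = Suc (n - Suc j)"
    using assms by simp
  then have upper: "(real j + 3/2) * (r gchoose (n - Suc j)) = (real n - real j) * (r gchoose (n - j))"
    using gbinomial_Suc_mult[of "n - Suc j" r] assms by (simp add: r_def algebra_simps)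
  have lower: "(real j + 1) * (r gchoose Suc j) = (real n - real j + 1/2) * (r gchoose j)"
    using gbinomial_Suc_mult[of j r] by (simp add: r_def algebra_simps)
  have "(r gchoose (n - Suc j)) * (r gchoose Suc j) * ((real j + 1) * (real j + 3/2))
      = ((real j + 3/2) * (r gchoose (n - Suc j))) * ((real j + 1) * (r gchoose Suc j))"
    by (simp only: mult_ac)
  also have "\<dots> = (r gchoose (n - j)) * (r gchoose j) * ((real n - real j) * (real n - real j + 1/2))"
    unfolding upper lower by (simp only: mult_ac)
  finally show ?thesis
    unfolding r_def .
qed

lemma gbinomial_odd_step:
  "(real (2 * n + 2) gchoose (2 * Suc j + 1)) * ((real j + 1) * (real j + 3/2))
     = (real (2 * n + 2) gchoose (2 * j + 1)) * ((real n - real j) * (real n - real j + 1/2))"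
proof -
  define N where "N = real (2 * n + 2)"
  have step3: "real (2 * j + 3) * (N gchoose (2 * j + 3)) = (N - real (2 * j + 2)) * (N gchoose (2 * j + 2))"
    using gbinomial_Suc_mult[of "2 * j + 2" N] by (simp add: numeral_3_eq_3)
  have step2: "real (2 * j + 2) * (N gchoose (2 * j + 2)) = (N - real (2 * j + 1)) * (N gchoose (2 * j + 1))"
    using gbinomial_Suc_mult[of "2 * j + 1" N] by simp
  have "(N gchoose (2 * Suc j + 1)) * ((real j + 1) * (real j + 3/2))
      = (real (2 * j + 3) * (N gchoose (2 * j + 3))) * real (2 * j + 2) / 4"
    by (simp add: numeral_3_eq_3 algebra_simps)
  also have "\<dots> = (N - real (2 * j + 2)) * (real (2 * j + 2) * (N gchoose (2 * j + 2))) / 4"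
    unfolding step3 by (simp only: mult_ac)
  also have "\<dots> = (N gchoose (2 * j + 1)) * ((real n - real j) * (real n - real j + 1/2))"
    unfolding step2 by (simp add: N_def field_simps)
  finally show ?thesis
    unfolding N_def .
qed

lemma gbinomial_half_product:
  assumes "j \<le> n"
  shows "2 * (((real n + 1/2) gchoose (n - j)) * ((real n + 1/2) gchoose j))
       = ((real n + 1/2) gchoose n) / (real n + 1) * real ((2 * n + 2) choose (2 * j + 1))"
proof -
  define f where "f j = ((real n + 1/2) gchoose (n - j)) * ((real n + 1/2) gchoose j)" for j
  define h where "h j = real (2 * n + 2) gchoose (2 * j + 1)" for j
  have "f j * h 0 = h j * f 0"
  proof (rule proportional_if_same_ratio[where p = "\<lambda>j. (real j + 1) * (real j + 3/2)"
        and q = "\<lambda>j. (real n - real j) * (real n - real j + 1/2)"])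
    show "f (Suc k) * ((real k + 1) * (real k + 3/2)) = f k * ((real n - real k) * (real n - real k + 1/2))"
      if "k < n" for k
      using gbinomial_half_product_step[OF that] by (simp only: f_def)
    show "h (Suc k) * ((real k + 1) * (real k + 3/2)) = h k * ((real n - real k) * (real n - real k + 1/2))" for k
      using gbinomial_odd_step by (simp only: h_def)
    show "(real k + 1) * (real k + 3/2) \<noteq> 0" for k
      by (simp add: add_pos_pos)
  qed (rule assms)
  moreover have "h 0 = 2 * (real n + 1)" "f 0 = (real n + 1/2) gchoose n"
    by (simp_all add: h_def f_def)
  ultimately have "2 * f j = ((real n + 1/2) gchoose n) / (real n + 1) * h j"
    by (simp add: field_simps)
  then show ?thesis
    by (simp only: f_def h_def binomial_gbinomial)
qed

lemma jacobiP_half_half_cos_mult_sin: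
  "jacobiP n (1/2) (1/2) (cos t) * sin t
     = ((real n + 1/2) gchoose n) / (real n + 1) * sin ((real n + 1) * t)"
proof -
  define s where "s = sin (t / 2)"
  define c where "c = cos (t / 2)"
  define B where "B = ((real n + 1/2) gchoose n) / (real n + 1)"
  have "cos t = 1 - 2 * s\<^sup>2" "cos t = 2 * c\<^sup>2 - 1" "sin t = 2 * s * c"
    using cos_double_sin[of "t / 2"] cos_double_cos[of "t / 2"] sin_double[of "t / 2"]
    by (simp_all add: s_def c_def)
  then have half_angle: "(cos t - 1) / 2 = - s\<^sup>2" "(cos t + 1) / 2 = c\<^sup>2" "sin t = 2 * s * c"
    by simp_all
  have "jacobiP n (1/2) (1/2) (cos t) * sin t
      = (\<Sum>j\<le>n. 2 * (((real n + 1/2) gchoose (n - j)) * ((real n + 1/2) gchoose j))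
                  * (-1) ^ j * s ^ (2 * j + 1) * c ^ (2 * n + 1 - 2 * j))"
    unfolding jacobiP_def half_angle sum_distrib_right
  proof (intro sum.cong refl)
    fix j assume "j \<in> {..n}"
    then have "2 * n + 1 - 2 * j = Suc (2 * (n - j))"
      by simp
    then have c: "c ^ (2 * n + 1 - 2 * j) = (c\<^sup>2) ^ (n - j) * c"
      by (simp only: power_Suc2 power_mult)
    have s: "(- s\<^sup>2) ^ j = (-1) ^ j * s ^ (2 * j)"
      by (simp add: power_minus[of "s\<^sup>2"] flip: power_mult)
    show "((real n + 1/2) gchoose (n - j)) * ((real n + 1/2) gchoose j) * (- s\<^sup>2) ^ j * (c\<^sup>2) ^ (n - j) * (2 * s * c)
        = 2 * (((real n + 1/2) gchoose (n - j)) * ((real n + 1/2) gchoose j)) * (-1) ^ j * s ^ (2 * j + 1) * c ^ (2 * n + 1 - 2 * j)"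
      unfolding c s power_add power_one_right by (simp only: mult_ac)
  qed
  also have "\<dots> = (\<Sum>j\<le>n. B * real ((2 * n + 2) choose (2 * j + 1)) * (-1) ^ j * s ^ (2 * j + 1) * c ^ (2 * n + 1 - 2 * j))"
    by (intro sum.cong refl) (simp add: B_def gbinomial_half_product)
  also have "\<dots> = B * sin (real (2 * n + 2) * (t / 2))"
    unfolding sin_even_multiple sum_distrib_left s_def c_def by (simp only: mult.assoc)
  also have "real (2 * n + 2) * (t / 2) = (real n + 1) * t"
    by (simp add: field_simps)
  finally show ?thesis unfolding B_def .
qed

lemma has_real_derivative_shifted_monomial:
  "((\<lambda>x::real. ((x - 1) / 2) ^ s * ((x + 1) / 2) ^ k) has_real_derivative
     (real s * ((x - 1) / 2) ^ (s - 1) * ((x + 1) / 2) ^ k + real k * ((x - 1) / 2) ^ s * ((x + 1) / 2) ^ (k - 1)) / 2) (at x)"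
  by (rule derivative_eq_intros refl | simp)+

lemma gbinomial_derivative_coeff:
  fixes M :: real
  assumes "s \<le> n" "M = real n + 3/2"
  shows "(M gchoose (n - s)) * (M gchoose Suc s) * real (Suc s) + (M gchoose (Suc n - s)) * (M gchoose s) * real (Suc n - s)
       = (real n + 3) * ((M gchoose (n - s)) * (M gchoose s))"
proof -
  have "(M gchoose (n - s)) * (M gchoose Suc s) * real (Suc s) = (M - real s) * ((M gchoose (n - s)) * (M gchoose s))"
    using gbinomial_Suc_mult[of s M] by (simp add: mult_ac)
  moreover have "(M gchoose (Suc n - s)) * (M gchoose s) * real (Suc n - s) = (M - real (n - s)) * ((M gchoose (n - s)) * (M gchoose s))"
    using gbinomial_Suc_mult[of "n - s" M] assms(1) by (simp add: Suc_diff_le mult_ac)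
  ultimately show ?thesis
    using assms by (simp add: algebra_simps)
qed

lemma jacobiP_half_half_has_derivative:
  "(jacobiP (Suc n) (1/2) (1/2) has_real_derivative (real n + 3) / 2 * jacobiP n (3/2) (3/2) x) (at x)"
proof -
  define M where "M = real n + 3/2"
  define u where "u = (x - 1) / 2"
  define v where "v = (x + 1) / 2"
  define c where "c s = (M gchoose (Suc n - s)) * (M gchoose s)" for s
  have P: "jacobiP (Suc n) (1/2) (1/2) = (\<lambda>x. \<Sum>s\<le>Suc n. c s * (((x - 1) / 2) ^ s * ((x + 1) / 2) ^ (Suc n - s)))"
    by (simp add: fun_eq_iff jacobiP_def c_def M_def add_ac mult.assoc)
  have "(jacobiP (Suc n) (1/2) (1/2) has_real_derivative
      (\<Sum>s\<le>Suc n. c s * ((real s * u ^ (s - 1) * v ^ (Suc n - s) + real (Suc n - s) * u ^ s * v ^ (Suc n - s - 1)) / 2))) (at x)"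
    unfolding P u_def v_def
    by (intro DERIV_sum DERIV_cmult has_real_derivative_shifted_monomial)
  also have "(\<Sum>s\<le>Suc n. c s * ((real s * u ^ (s - 1) * v ^ (Suc n - s) + real (Suc n - s) * u ^ s * v ^ (Suc n - s - 1)) / 2))
      = ((\<Sum>s\<le>Suc n. c s * (real s * u ^ (s - 1) * v ^ (Suc n - s)))
         + (\<Sum>s\<le>Suc n. c s * (real (Suc n - s) * u ^ s * v ^ (Suc n - s - 1)))) / 2"
    unfolding sum.distrib[symmetric] sum_divide_distrib by (intro sum.cong refl) (simp add: field_simps)
  also have "(\<Sum>s\<le>Suc n. c s * (real s * u ^ (s - 1) * v ^ (Suc n - s)))
      = (\<Sum>s\<le>n. c (Suc s) * real (Suc s) * u ^ s * v ^ (n - s))"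
    unfolding sum.atMost_Suc_shift by (simp add: mult.assoc)
  also have "(\<Sum>s\<le>Suc n. c s * (real (Suc n - s) * u ^ s * v ^ (Suc n - s - 1)))
      = (\<Sum>s\<le>n. c s * real (Suc n - s) * u ^ s * v ^ (n - s))"
    unfolding sum.atMost_Suc by (simp add: mult.assoc)
  also have "((\<Sum>s\<le>n. c (Suc s) * real (Suc s) * u ^ s * v ^ (n - s)) + (\<Sum>s\<le>n. c s * real (Suc n - s) * u ^ s * v ^ (n - s))) / 2
      = (\<Sum>s\<le>n. (c (Suc s) * real (Suc s) + c s * real (Suc n - s)) * u ^ s * v ^ (n - s)) / 2"
    by (simp add: sum.distrib[symmetric] algebra_simps)
  also have "\<dots> = (\<Sum>s\<le>n. (real n + 3) * ((M gchoose (n - s)) * (M gchoose s)) * u ^ s * v ^ (n - s)) / 2"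
    by (intro arg_cong[where f = "\<lambda>z. z / 2"] sum.cong refl)
       (simp only: c_def diff_Suc_Suc atMost_iff gbinomial_derivative_coeff[OF _ M_def])
  also have "\<dots> = (real n + 3) / 2 * jacobiP n (3/2) (3/2) x"
    by (simp add: jacobiP_def M_def u_def v_def sum_distrib_left sum_divide_distrib mult_ac add_ac)
  finally show ?thesis .
qed

definition jacobi_scale :: "nat \<Rightarrow> real" where
  "jacobi_scale n = 4 * ((real n + 3/2) gchoose Suc n) / ((real n + 2) * (real n + 3))"

lemma sin_cube_jacobiP_three_halves:
  "sin t ^ 3 * jacobiP n (3/2) (3/2) (cos t)
     = jacobi_scale n / 2 * (cos t * sin ((real n + 2) * t) - (real n + 2) * sin t * cos ((real n + 2) * t))"
proof -
  define Q where "Q = jacobiP (Suc n) (1/2) (1/2)"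
  define R where "R = jacobiP n (3/2) (3/2)"
  define k where "k = ((real n + 3/2) gchoose Suc n) / (real n + 2)"
  have Q_sin: "Q (cos t) * sin t = k * sin ((real n + 2) * t)" for t
    using jacobiP_half_half_cos_mult_sin[of "Suc n" t] by (simp add: Q_def k_def add_ac)
  have "((\<lambda>t. Q (cos t) * sin t) has_real_derivative
      (real n + 3) / 2 * R (cos t) * (- sin t) * sin t + Q (cos t) * cos t) (at t)"
    unfolding Q_def R_def
    by (rule derivative_eq_intros DERIV_chain2[OF jacobiP_half_half_has_derivative] refl | simp)+
  moreover have "((\<lambda>t. Q (cos t) * sin t) has_real_derivative k * (cos ((real n + 2) * t) * (real n + 2))) (at t)"
    unfolding Q_sin by (rule derivative_eq_intros refl | simp)+
  ultimately have "(real n + 3) / 2 * R (cos t) * (- sin t) * sin t + Q (cos t) * cos t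
      = k * (cos ((real n + 2) * t) * (real n + 2))"
    by (rule DERIV_unique)
  from arg_cong[OF this, of "\<lambda>z. 2 * sin t * z"]
  have "(real n + 3) * (sin t ^ 3 * R (cos t))
      = 2 * (Q (cos t) * sin t) * cos t - 2 * k * (real n + 2) * sin t * cos ((real n + 2) * t)"
    by (simp add: field_simps power3_eq_cube)
  then have "(real n + 3) * (sin t ^ 3 * R (cos t))
      = 2 * k * (cos t * sin ((real n + 2) * t) - (real n + 2) * sin t * cos ((real n + 2) * t))"
    unfolding Q_sin by (simp add: algebra_simps)
  then have "sin t ^ 3 * R (cos t)
      = 2 * k / (real n + 3) * (cos t * sin ((real n + 2) * t) - (real n + 2) * sin t * cos ((real n + 2) * t))"
    by (simp add: field_simps)
  moreover have "jacobi_scale n / 2 = 2 * k / (real n + 3)"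
    by (simp add: jacobi_scale_def k_def)
  ultimately show ?thesis
    by (simp only: R_def)
qed

lemma gbinomial_three_halves_Gamma:
  "(real n + 3/2) gchoose Suc n = 2 * Gamma (real n + 5/2) / (sqrt pi * fact (Suc n))"
proof -
  have "(real n + 3/2) gchoose Suc n = pochhammer (3/2) (Suc n) / fact (Suc n)"
    by (simp add: gbinomial_pochhammer')
  also have "pochhammer (3/2) (Suc n) = 2 * pochhammer (1/2 :: real) (Suc (Suc n))"
    by (simp add: pochhammer_rec)
  also have "pochhammer (1/2 :: real) (Suc (Suc n)) = Gamma (real n + 5/2) / sqrt pi"
  proof -
    have "(1/2 :: real) \<notin> \<int>\<^sub>\<le>\<^sub>0"
      by (auto elim!: nonpos_Ints_cases)
    then show ?thesis
      by (simp add: pochhammer_Gamma Gamma_one_half_real add_ac)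
  qed
  finally show ?thesis
    by simp
qed

lemma normN_mult_jacobi_scale:
  "normN n * jacobi_scale n = 4 / sqrt (2 * pi * (real n + 1) * (real n + 3))"
proof -
  define F where "F = (fact n :: real)"
  define G where "G = Gamma (real n + 5/2)"
  define a where "a = real n + 1"
  define b where "b = real n + 2"
  define c where "c = real n + 3"
  define S where "S = sqrt (a * c)"
  have pos: "G > 0" "F > 0" "a > 0" "b > 0" "c > 0"
    by (simp_all add: G_def F_def a_def b_def c_def)
  have "Gamma (1 + real n) = F" "Gamma (4 + real n) = F * a * b * c"
    using Gamma_fact[of n] Gamma_fact[of "n + 3"]
    by (simp_all add: F_def a_def b_def c_def numeral_3_eq_3 algebra_simps)
  then have "omega_n n * Gamma (1 + real n) * Gamma (4 + real n) = (F * b)\<^sup>2 * (a * c)"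
    by (simp add: omega_n_def b_def power2_eq_square algebra_simps)
  then have "normN n = F * b * S / (2 * sqrt 2 * G)"
    using pos by (simp add: normN_def G_def S_def real_sqrt_mult add.commute)
  moreover have "jacobi_scale n = 8 * G / (sqrt pi * F * a * b * c)"
    unfolding jacobi_scale_def gbinomial_three_halves_Gamma
    by (simp add: G_def F_def a_def b_def c_def field_simps)
  ultimately have "normN n * jacobi_scale n = F * b * S / (2 * sqrt 2 * G) * (8 * G / (sqrt pi * F * a * b * c))"
    by (simp only:)
  also have "\<dots> = 4 * S / (sqrt 2 * sqrt pi * (a * c))"
    using pos by (simp add: field_simps)
  also have "\<dots> = 4 / (sqrt 2 * sqrt pi * S)"
    using pos by (simp add: S_def field_simps)
  also have "\<dots> = 4 / sqrt (2 * pi * (real n + 1) * (real n + 3))"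
    by (simp add: S_def a_def c_def real_sqrt_mult mult.assoc)
  finally show ?thesis .
qed

lemma jacobi_scale_pos: "jacobi_scale n > 0"
  by (simp add: jacobi_scale_def gbinomial_three_halves_Gamma)

definition gegen_trig :: "int \<Rightarrow> real \<Rightarrow> real" where
  "gegen_trig n t = cos t * sin ((of_int n + 2) * t) - (of_int n + 2) * sin t * cos ((of_int n + 2) * t)"

text \<open>A multiple of the Gegenbauer polynomial C_n^(2)(cos t). The value 0 at negative n makes the
  three-term recurrence hold from n = 0 on.\<close>

definition gegen :: "int \<Rightarrow> real \<Rightarrow> real" where
  "gegen n t = (if n < 0 then 0 else jacobiP (nat n) (3/2) (3/2) (cos t) / jacobi_scale (nat n))"

lemma sin_cube_gegen:
  assumes "n \<ge> -1"
  shows "sin t ^ 3 * gegen n t = gegen_trig n t / 2"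
proof (cases "n < 0")
  case True
  then have "n = -1"
    using assms by simp
  then show ?thesis
    by (simp add: gegen_def gegen_trig_def algebra_simps)
next
  case False
  then show ?thesis
    using sin_cube_jacobiP_three_halves[of t "nat n"] jacobi_scale_pos[of "nat n"]
    by (simp add: gegen_def gegen_trig_def field_simps)
qed

lemma gegen_trig_recurrence:
  "(of_int n + 1) * gegen_trig (n + 1) t + (of_int n + 3) * gegen_trig (n - 1) t
     = 2 * (of_int n + 2) * cos t * gegen_trig n t"
proof -
  define x where "x = (of_int n + 2) * t"
  have x: "(of_int (n + 1) + 2) * t = x + t" "(of_int (n - 1) + 2) * t = x - t" "(of_int n + 2) * t = x"
    by (simp_all add: x_def algebra_simps)
  show ?thesis
    unfolding gegen_trig_def x sin_add cos_add sin_diff cos_diff by (simp add: algebra_simps)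
qed

text \<open>Stated after multiplication by sin t ^ 3, which suffices because every integrand below carries
  the weight sin t ^ 4.\<close>

lemma gegen_recurrence:
  assumes "n \<ge> 0"
  shows "sin t ^ 3 * ((of_int n + 1) * gegen (n + 1) t + (of_int n + 3) * gegen (n - 1) t)
       = sin t ^ 3 * (2 * (of_int n + 2) * cos t * gegen n t)"
proof -
  have "sin t ^ 3 * ((of_int n + 1) * gegen (n + 1) t + (of_int n + 3) * gegen (n - 1) t)
      = (of_int n + 1) * (sin t ^ 3 * gegen (n + 1) t) + (of_int n + 3) * (sin t ^ 3 * gegen (n - 1) t)"
    by (simp add: algebra_simps)
  also have "\<dots> = ((of_int n + 1) * gegen_trig (n + 1) t + (of_int n + 3) * gegen_trig (n - 1) t) / 2"
    using assms by (simp add: sin_cube_gegen add_divide_distrib)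
  also have "\<dots> = 2 * (of_int n + 2) * cos t * (sin t ^ 3 * gegen n t)"
    using assms by (simp add: gegen_trig_recurrence sin_cube_gegen)
  finally show ?thesis
    by (simp add: mult_ac)
qed

lemma gegen_0 [simp]: "gegen 0 t = 1"
  by (simp add: gegen_def jacobiP_def jacobi_scale_def)

lemma continuous_on_gegen [continuous_intros]: "continuous_on S (gegen n)"
proof (cases "n < 0")
  case False
  then have eq: "gegen n = (\<lambda>t. jacobiP (nat n) (3/2) (3/2) (cos t) / jacobi_scale (nat n))"
    by (simp add: fun_eq_iff gegen_def)
  show ?thesis
    using jacobi_scale_pos[of "nat n"] unfolding eq jacobiP_def by (intro continuous_intros) auto
qed (simp add: gegen_def)

definition gegen_triple :: "int \<Rightarrow> int \<Rightarrow> int \<Rightarrow> real" where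
  "gegen_triple i j m = integral {0..pi} (\<lambda>t. gegen i t * gegen j t * gegen m t * sin t ^ 4)"

lemma gegen_triple_recurrence:
  assumes "a \<ge> 0"
  shows "(of_int a + 1) * gegen_triple (a + 1) b c + (of_int a + 3) * gegen_triple (a - 1) b c
       = 2 * (of_int a + 2) * integral {0..pi} (\<lambda>t. cos t * gegen a t * gegen b t * gegen c t * sin t ^ 4)"
proof -
  define f where "f k t = gegen k t * gegen b t * gegen c t * sin t ^ 4" for k t
  have pointwise: "(of_int a + 1) * f (a + 1) t + (of_int a + 3) * f (a - 1) t
      = 2 * (of_int a + 2) * (cos t * gegen a t * gegen b t * gegen c t * sin t ^ 4)" for t
  proof -
    have s4: "sin t ^ 4 = sin t * sin t ^ 3"
      by (simp add: power4_eq_xxxx power3_eq_cube)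
    have "(of_int a + 1) * f (a + 1) t + (of_int a + 3) * f (a - 1) t
        = sin t * gegen b t * gegen c t * (sin t ^ 3 * ((of_int a + 1) * gegen (a + 1) t + (of_int a + 3) * gegen (a - 1) t))"
      unfolding f_def s4 by (simp add: algebra_simps)
    also have "\<dots> = sin t * gegen b t * gegen c t * (sin t ^ 3 * (2 * (of_int a + 2) * cos t * gegen a t))"
      using assms by (simp only: gegen_recurrence)
    finally show ?thesis
      unfolding s4 by (simp add: algebra_simps)
  qed
  have int: "f k integrable_on {0..pi}" for k
    unfolding f_def by (intro integrable_continuous_interval continuous_intros)
  have "(of_int a + 1) * gegen_triple (a + 1) b c + (of_int a + 3) * gegen_triple (a - 1) b c
      = integral {0..pi} (\<lambda>t. (of_int a + 1) * f (a + 1) t + (of_int a + 3) * f (a - 1) t)"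
    unfolding integral_add[OF integrable_on_mult_right[OF int] integrable_on_mult_right[OF int]]
    by (simp add: gegen_triple_def f_def)
  also have "\<dots> = integral {0..pi} (\<lambda>t. 2 * (of_int a + 2) * (cos t * gegen a t * gegen b t * gegen c t * sin t ^ 4))"
    by (rule integral_cong) (rule pointwise)
  finally show ?thesis
    by simp
qed

lemma has_integral_cos_multiple:
  "((\<lambda>t. cos (real k * t)) has_integral (if k = 0 then pi else 0)) {0..pi}"
proof (cases "k = 0")
  case False
  have "((\<lambda>t. cos (real k * t)) has_integral (sin (real k * pi) / real k - sin (real k * 0) / real k)) {0..pi}"
    using False
    by (intro fundamental_theorem_of_calculus)
       (auto intro!: derivative_eq_intros simp flip: has_real_derivative_iff_has_vector_derivative)
  with False show ?thesis
    by simp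
qed (use has_integral_const_real[of "1::real" 0 pi] in simp)

lemma gegen_triple_0_0:
  assumes "m \<ge> 0"
  shows "gegen_triple 0 0 m = (if m = 0 then 3 * pi / 8 else 0)"
proof -
  define k where "k = nat m"
  define F where "F t = ((real k + 3) / 4 * cos (real k * t) - (real k + 2) / 2 * cos (real (k + 2) * t)
        + (real k + 1) / 4 * cos (real (k + 4) * t)) / 2" for t
  have "gegen 0 t * gegen 0 t * gegen m t * sin t ^ 4 = F t" for t
  proof -
    define x where "x = (real k + 2) * t"
    have "(of_int m + 2) * t = x" "of_int m = real k"
      "real k * t = x - 2 * t" "real (k + 2) * t = x" "real (k + 4) * t = x + 2 * t"
      using assms by (simp_all add: x_def k_def algebra_simps)
    then have "sin t * gegen_trig m t = 2 * F t"
      unfolding gegen_trig_def F_def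
      by (simp only: cos_add cos_diff sin_double cos_double_sin) (simp add: field_simps power2_eq_square)
    moreover have "gegen m t * sin t ^ 4 = sin t * (sin t ^ 3 * gegen m t)"
      by (simp add: power4_eq_xxxx power3_eq_cube)
    ultimately show ?thesis
      using assms by (simp add: sin_cube_gegen)
  qed
  moreover have "(F has_integral ((real k + 3) / 4 * (if k = 0 then pi else 0)
      - (real k + 2) / 2 * (if k + 2 = 0 then pi else 0) + (real k + 1) / 4 * (if k + 4 = 0 then pi else 0)) / 2) {0..pi}"
    unfolding F_def
    by (intro has_integral_divide has_integral_add has_integral_diff has_integral_mult_right has_integral_cos_multiple)
  ultimately have "((\<lambda>t. gegen 0 t * gegen 0 t * gegen m t * sin t ^ 4) has_integral
      (if k = 0 then 3 * pi / 8 else 0)) {0..pi}"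
    by (auto intro: has_integral_eq)
  then show ?thesis
    using assms by (simp add: gegen_triple_def integral_unique k_def)
qed

text \<open>Obtained by eliminating the integral of cos t * gegen a t * gegen b t * gegen c t * sin t ^ 4
  between gegen_triple_recurrence in the first and in the second index.\<close>

definition triple_recurrence :: "(int \<Rightarrow> int \<Rightarrow> int \<Rightarrow> real) \<Rightarrow> bool" where
  "triple_recurrence D \<longleftrightarrow> (\<forall>a b c. 0 \<le> a \<longrightarrow> 0 \<le> b \<longrightarrow>
     (of_int b + 2) * ((of_int a + 1) * D (a + 1) b c + (of_int a + 3) * D (a - 1) b c)
     = (of_int a + 2) * ((of_int b + 1) * D a (b + 1) c + (of_int b + 3) * D a (b - 1) c))"

lemma triple_recurrence_diff:
  assumes "triple_recurrence X" "triple_recurrence Y"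
  shows "triple_recurrence (\<lambda>i j m. X i j m - Y i j m)"
  using assms unfolding triple_recurrence_def by (simp add: algebra_simps)

lemma triple_recurrence_gegen_triple: "triple_recurrence gegen_triple"
  unfolding triple_recurrence_def
proof (intro allI impI)
  fix a b c :: int
  assume "0 \<le> a" "0 \<le> b"
  define W where "W = integral {0..pi} (\<lambda>t. cos t * gegen a t * gegen b t * gegen c t * sin t ^ 4)"
  have "(of_int a + 1) * gegen_triple (a + 1) b c + (of_int a + 3) * gegen_triple (a - 1) b c = 2 * (of_int a + 2) * W"
    using gegen_triple_recurrence[OF \<open>0 \<le> a\<close>, of b c] by (simp add: W_def)
  moreover have "(of_int b + 1) * gegen_triple a (b + 1) c + (of_int b + 3) * gegen_triple a (b - 1) c = 2 * (of_int b + 2) * W"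
    using gegen_triple_recurrence[OF \<open>0 \<le> b\<close>, of a c]
    by (simp add: W_def gegen_triple_def mult_ac)
  ultimately show "(of_int b + 2) * ((of_int a + 1) * gegen_triple (a + 1) b c + (of_int a + 3) * gegen_triple (a - 1) b c)
      = (of_int a + 2) * ((of_int b + 1) * gegen_triple a (b + 1) c + (of_int b + 3) * gegen_triple a (b - 1) c)"
    by (simp add: algebra_simps)
qed

lemma triple_recurrence_propagate:
  assumes rec: "triple_recurrence D"
    and first: "\<And>j. D (-1) j c = 0" and second: "\<And>i. D i (-1) c = 0"
    and base: "\<And>j. j \<ge> -1 \<Longrightarrow> D 0 j c = 0"
    and "i \<ge> -1" "j \<ge> -1"
  shows "D i j c = 0"
proof -
  have "\<forall>j\<ge>-1. D (int k - 1) j c = 0 \<and> D (int k) j c = 0" for k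
  proof (induction k)
    case 0
    then show ?case using first base by simp
  next
    case (Suc k)
    have "D (int k + 1) j c = 0" if "j \<ge> -1" for j
    proof (cases "j = -1")
      case False
      with that have "j \<ge> 0" by simp
      then have "(of_int j + 2) * ((of_int (int k) + 1) * D (int k + 1) j c + (of_int (int k) + 3) * D (int k - 1) j c)
          = (of_int (int k) + 2) * ((of_int j + 1) * D (int k) (j + 1) c + (of_int j + 3) * D (int k) (j - 1) c)"
        using rec[unfolded triple_recurrence_def, rule_format, of "int k" j c] by simp
      moreover have "D (int k - 1) j c = 0" "D (int k) (j + 1) c = 0" "D (int k) (j - 1) c = 0"
        using Suc.IH \<open>j \<ge> 0\<close> by simp_all
      ultimately show ?thesis
        using \<open>j \<ge> 0\<close> by (simp add: add_pos_nonneg)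
    qed (simp add: second)
    with Suc.IH show ?case
      by (simp add: add.commute)
  qed
  from this[of "nat (i + 1)"] show ?thesis
    using assms(5,6) by simp
qed

text \<open>The recurrence determines D from its slice at first index 0. For c = 0 that slice is
  D 0 j 0 = D 0 0 j, which is given; by symmetry, D 0 j c = D j c 0 reduces every other slice
  to the case c = 0.\<close>

lemma triple_recurrence_unique:
  assumes rec: "triple_recurrence D"
    and sym12: "\<And>i j m. D i j m = D j i m" and sym23: "\<And>i j m. D i j m = D i m j"
    and vanish: "\<And>j m. D (-1) j m = 0"
    and base: "\<And>m. m \<ge> 0 \<Longrightarrow> D 0 0 m = 0"
    and "i \<ge> -1" "j \<ge> -1" "m \<ge> -1"
  shows "D i j m = 0"
proof -
  have vanish2: "D i (-1) m = 0" and vanish3: "D i j (-1) = 0" for i j m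
    using vanish sym12 sym23 by metis+
  have stage1: "D i j 0 = 0" if "i \<ge> -1" "j \<ge> -1" for i j
  proof (rule triple_recurrence_propagate[OF rec vanish vanish2 _ that])
    show "D 0 j 0 = 0" if "j \<ge> -1" for j
      using that base[of j] vanish2[of 0 0] sym23[of 0 j 0] by (cases "j = -1") auto
  qed
  show ?thesis
  proof (rule triple_recurrence_propagate[OF rec vanish vanish2 _ assms(6,7)])
    show "D 0 j m = 0" if "j \<ge> -1" for j
      using stage1[OF that assms(8)] sym12[of 0 j m] sym23[of j 0 m] by simp
  qed
qed

definition even_triangle :: "int \<Rightarrow> int \<Rightarrow> int \<Rightarrow> bool" where
  "even_triangle i j m \<longleftrightarrow> 0 \<le> j + m - i \<and> 0 \<le> i + m - j \<and> 0 \<le> i + j - m \<and> even (i + j + m)"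

definition triple_poly :: "int \<Rightarrow> int \<Rightarrow> int \<Rightarrow> int" where
  "triple_poly i j m = (i + j - m + 2) * (i - j + m + 2) * (- i + j + m + 2) * (i + j + m + 6)"

text \<open>The factor pi / 128 is fixed by gegen_triple 0 0 0 = 3 pi / 8.\<close>

definition triple_closed :: "int \<Rightarrow> int \<Rightarrow> int \<Rightarrow> real" where
  "triple_closed i j m = (if even_triangle i j m then pi / 128 * of_int (triple_poly i j m) else 0)"

lemma triple_closed_swap12: "triple_closed i j m = triple_closed j i m"
proof -
  have "even_triangle i j m = even_triangle j i m" "triple_poly i j m = triple_poly j i m"
    unfolding even_triangle_def triple_poly_def by (auto simp: algebra_simps)
  then show ?thesis
    by (simp add: triple_closed_def)
qed

lemma triple_closed_swap23: "triple_closed i j m = triple_closed i m j"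
proof -
  have "even_triangle i j m = even_triangle i m j" "triple_poly i j m = triple_poly i m j"
    unfolding even_triangle_def triple_poly_def by (auto simp: algebra_simps)
  then show ?thesis
    by (simp add: triple_closed_def)
qed

lemma triple_closed_eq_poly:
  assumes "even (i + j + m)" "j + m - i \<ge> -2" "i + m - j \<ge> -2" "i + j - m \<ge> -2"
  shows "triple_closed i j m = pi / 128 * of_int (triple_poly i j m)"
proof (cases "even_triangle i j m")
  case False
  with assms have "j + m - i = -2 \<or> i + m - j = -2 \<or> i + j - m = -2"
    unfolding even_triangle_def by presburger
  then have "triple_poly i j m = 0"
    unfolding triple_poly_def by (auto simp: algebra_simps)
  with False show ?thesis
    by (simp add: triple_closed_def)
qed (simp add: triple_closed_def)

lemma triple_recurrence_triple_closed: "triple_recurrence triple_closed"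
  unfolding triple_recurrence_def
proof (intro allI impI)
  fix a b c :: int
  let ?rec = "\<lambda>D. (of_int b + 2) * ((of_int a + 1) * D (a + 1) b c + (of_int a + 3) * D (a - 1) b c)
      = (of_int a + 2) * ((of_int b + 1) * D a (b + 1) c + (of_int b + 3) * D a (b - 1) c)"
  show "?rec triple_closed"
  proof (cases "even (a + b + c)")
    case True
    then have "\<not> even_triangle (a + 1) b c" "\<not> even_triangle (a - 1) b c"
      "\<not> even_triangle a (b + 1) c" "\<not> even_triangle a (b - 1) c"
      unfolding even_triangle_def by presburger+
    then show ?thesis
      by (simp add: triple_closed_def)
  next
    case odd: False
    show ?thesis
    proof (cases "b + c - a \<ge> -1 \<and> a + c - b \<ge> -1 \<and> a + b - c \<ge> -1")
      case True
      have poly_rec: "(b + 2) * ((a + 1) * triple_poly (a + 1) b c + (a + 3) * triple_poly (a - 1) b c)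
          = (a + 2) * ((b + 1) * triple_poly a (b + 1) c + (b + 3) * triple_poly a (b - 1) c)"
        by (simp add: triple_poly_def algebra_simps)
      define \<kappa> where "\<kappa> = pi / 128"
      from arg_cong[OF poly_rec, of "\<lambda>z. \<kappa> * real_of_int z"]
      have "?rec (\<lambda>i j m. \<kappa> * of_int (triple_poly i j m))"
        by (simp add: algebra_simps)
      moreover have "triple_closed (a + 1) b c = \<kappa> * of_int (triple_poly (a + 1) b c)"
        "triple_closed (a - 1) b c = \<kappa> * of_int (triple_poly (a - 1) b c)"
        "triple_closed a (b + 1) c = \<kappa> * of_int (triple_poly a (b + 1) c)"
        "triple_closed a (b - 1) c = \<kappa> * of_int (triple_poly a (b - 1) c)"
        unfolding \<kappa>_def using odd True by (intro triple_closed_eq_poly; presburger)+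
      ultimately show ?thesis
        by simp
    next
      case False
      with odd have "b + c - a \<le> -3 \<or> a + c - b \<le> -3 \<or> a + b - c \<le> -3"
        by presburger
      then have "\<not> even_triangle (a + 1) b c" "\<not> even_triangle (a - 1) b c"
        "\<not> even_triangle a (b + 1) c" "\<not> even_triangle a (b - 1) c"
        unfolding even_triangle_def by presburger+
      then show ?thesis
        by (simp add: triple_closed_def)
    qed
  qed
qed

lemma triple_closed_minus_one: "triple_closed (-1) j m = 0"
  by (simp add: triple_closed_def even_triangle_def)

lemma gegen_triple_eq_closed:
  assumes "i \<ge> -1" "j \<ge> -1" "m \<ge> -1"
  shows "gegen_triple i j m = triple_closed i j m"
proof -
  have "gegen_triple i j m - triple_closed i j m = 0"
  proof (rule triple_recurrence_unique[where D = "\<lambda>i j m. gegen_triple i j m - triple_closed i j m", OF _ _ _ _ _ assms])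
    show "triple_recurrence (\<lambda>i j m. gegen_triple i j m - triple_closed i j m)"
      by (intro triple_recurrence_diff triple_recurrence_gegen_triple triple_recurrence_triple_closed)
    show "gegen_triple i j m - triple_closed i j m = gegen_triple j i m - triple_closed j i m"
      "gegen_triple i j m - triple_closed i j m = gegen_triple i m j - triple_closed i m j" for i j m
      using triple_closed_swap12 triple_closed_swap23 by (simp_all add: gegen_triple_def mult_ac)
    show "gegen_triple (-1) j m - triple_closed (-1) j m = 0" for j m
      by (simp add: gegen_triple_def gegen_def triple_closed_minus_one)
    show "gegen_triple 0 0 m - triple_closed 0 0 m = 0" if "m \<ge> 0" for m
      using that by (simp add: gegen_triple_0_0 triple_closed_def even_triangle_def triple_poly_def)
  qed
  then show ?thesis
    by simp
qed

lemma Cbar_eq_gegen_triple: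
  "Cbar i j m = normN i * jacobi_scale i * (normN j * jacobi_scale j) * (normN m * jacobi_scale m)
     * gegen_triple (int i) (int j) (int m)"
proof -
  have "efun n x = normN n * jacobi_scale n * gegen (int n) x" for n x
    using jacobi_scale_pos[of n] by (simp add: efun_def gegen_def)
  then show ?thesis
    by (simp add: Cbar_def gegen_triple_def mult_ac)
qed

lemma normalization_product:
  "normN i * jacobi_scale i * (normN j * jacobi_scale j) * (normN m * jacobi_scale m)
     = 32 / (pi * sqrt (2 * pi * (real i + 1) * (real i + 3) * (real j + 1) * (real j + 3) * (real m + 1) * (real m + 3)))"
proof -
  define A where "A = 2 * pi * (real i + 1) * (real i + 3) * (real j + 1) * (real j + 3) * (real m + 1) * (real m + 3)"
  have "2 * pi * (real i + 1) * (real i + 3) * (2 * pi * (real j + 1) * (real j + 3)) * (2 * pi * (real m + 1) * (real m + 3))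
      = (2 * pi)\<^sup>2 * A"
    unfolding A_def power2_eq_square by (simp only: mult_ac)
  then have "sqrt (2 * pi * (real i + 1) * (real i + 3)) * sqrt (2 * pi * (real j + 1) * (real j + 3))
      * sqrt (2 * pi * (real m + 1) * (real m + 3)) = 2 * pi * sqrt A"
    by (simp only: real_sqrt_mult[symmetric]) (simp add: real_sqrt_mult)
  then show ?thesis
    unfolding normN_mult_jacobi_scale A_def[symmetric] by (simp add: field_simps)
qed

lemma ind_triangle_conditions:
  fixes i j m :: int
  shows "ind (\<bar>j - m\<bar> \<le> i \<and> i \<le> j + m) * ind (\<bar>i - m\<bar> \<le> j \<and> j \<le> i + m)
      * ind (\<bar>i - j\<bar> \<le> m \<and> m \<le> i + j) * ind (j + m - i \<ge> 0 \<and> even (j + m - i))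
      * ind (i + m - j \<ge> 0 \<and> even (i + m - j)) * ind (i + j - m \<ge> 0 \<and> even (i + j - m))
    = ind (even_triangle i j m)"
proof -
  have "(\<bar>j - m\<bar> \<le> i \<and> i \<le> j + m) \<and> (\<bar>i - m\<bar> \<le> j \<and> j \<le> i + m) \<and> (\<bar>i - j\<bar> \<le> m \<and> m \<le> i + j)
      \<and> (j + m - i \<ge> 0 \<and> even (j + m - i)) \<and> (i + m - j \<ge> 0 \<and> even (i + m - j))
      \<and> (i + j - m \<ge> 0 \<and> even (i + j - m)) \<longleftrightarrow> even_triangle i j m"
    unfolding even_triangle_def abs_le_iff by presburger
  then show ?thesis
    unfolding ind_def by (cases "even_triangle i j m") auto
qed

theorem lemma5p8:
  fixes i j m :: nat
  shows "Cbar i j m =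
    (of_int (int i + int j - int m + 2) * of_int (int i - int j + int m + 2)
      * of_int (- int i + int j + int m + 2) * of_int (int i + int j + int m + 6))
    / (4 * sqrt (2 * pi * (real i + 1) * (real i + 3) * (real j + 1) * (real j + 3)
                 * (real m + 1) * (real m + 3)))
    * ind (\<bar>int j - int m\<bar> \<le> int i \<and> int i \<le> int j + int m)
    * ind (\<bar>int i - int m\<bar> \<le> int j \<and> int j \<le> int i + int m)
    * ind (\<bar>int i - int j\<bar> \<le> int m \<and> int m \<le> int i + int j)
    * ind (int j + int m - int i \<ge> 0 \<and> even (int j + int m - int i))
    * ind (int i + int m - int j \<ge> 0 \<and> even (int i + int m - int j))
    * ind (int i + int j - int m \<ge> 0 \<and> even (int i + int j - int m))"
proof -
  let ?S = "sqrt (2 * pi * (real i + 1) * (real i + 3) * (real j + 1) * (real j + 3) * (real m + 1) * (real m + 3))"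
  have "Cbar i j m = 32 / (pi * ?S) * triple_closed (int i) (int j) (int m)"
    by (simp add: Cbar_eq_gegen_triple normalization_product gegen_triple_eq_closed)
  also have "\<dots> = of_int (triple_poly (int i) (int j) (int m)) / (4 * ?S) * ind (even_triangle (int i) (int j) (int m))"
    by (simp add: triple_closed_def ind_def)
  finally show ?thesis
    by (simp only: triple_poly_def of_int_mult mult.assoc flip: ind_triangle_conditions)
qed

end
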